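(* For every integer $k\ge1$, the sequence $\big(P_n^{(\alpha,\beta,v,k)}\big)_{n\ge k}$ is orthogonal with respect to the weight matrix $W^{(k)}$, i.e. $\int_0^1P_n^{(\alpha,\beta,v,k)}(t)W^{(k)}(t)\big(P_m^{(\alpha,\beta,v,k)}(t)\big)^*dt=0$ for $n\neq m$, $n,m\ge k$.
   Context: Fix real $\alpha,\beta,v$ with $\alpha>-1$, $\beta>-1$, $|\alpha-\beta|<|v|<\alpha+\beta+2$. For real parameters $a,b,v$ write $\kappa'_{\pm v,\pm b}=a\pm v\pm b$ and define $$W^{(a,b,v)}(t)=t^a(1-t)^b\begin{pmatrix}\frac{v(\kappa'_{v,b}+2)}{\kappa'_{v,-b}}t^2-(\kappa'_{v,b}+2)t+(a+1) & (a+b+2)t-(a+1)\\ (a+b+2)t-(a+1) & -\frac{v(\kappa'_{-v,b}+2)}{\kappa'_{-v,-b}}t^2-(\kappa'_{-v,b}+2)t+(a+1)\end{pmatrix},\quad t\in(0,1),$$ and $W^{(k)}=W^{(\alpha+k,\beta+k,v)}$. Let $(P_n^{(\alpha,\beta,v)})_{n\ge0}$ be the monic $2\times2$ matrix polynomials orthogonal w.r.t. $W^{(0)}$ (inner product $\int_0^1PW^{(0)}Q^*dt$), and for $n\ge k$ set $P_n^{(\alpha,\beta,v,k)}=\frac{(n-k)!}{n!}\frac{d^k}{dt^k}P_n^{(\alpha,\beta,v)}$. *)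

theory Defs
  imports "HOL-Analysis.Analysis"
begin

text \<open>2x2 real matrices are rendered as real^2^2; matrix products via **, transpose via transpose
  (for real matrices the adjoint is the transpose).\<close>

definition mat2 :: "real \<Rightarrow> real \<Rightarrow> real \<Rightarrow> real \<Rightarrow> real^2^2" where
  "mat2 x11 x12 x21 x22 =
     (\<chi> i j. if i = 1 then (if j = 1 then x11 else x12) else (if j = 1 then x21 else x22))"

text \<open>The weight matrix W^(a,b,v)(t), with kappa'_{+-v,+-b} = a +- v +- b.\<close>
definition Wmat :: "real \<Rightarrow> real \<Rightarrow> real \<Rightarrow> real \<Rightarrow> real^2^2" where
  "Wmat a b v t = (t powr a * (1 - t) powr b) *\<^sub>R
     mat2 (v * (a + v + b + 2) / (a + v - b) * t^2 - (a + v + b + 2) * t + (a + 1))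
          ((a + b + 2) * t - (a + 1))
          ((a + b + 2) * t - (a + 1))
          (- v * (a - v + b + 2) / (a - v - b) * t^2 - (a - v + b + 2) * t + (a + 1))"

definition mpoly_eval :: "(nat \<Rightarrow> real^2^2) \<Rightarrow> nat \<Rightarrow> real \<Rightarrow> real^2^2" where
  "mpoly_eval C n t = (\<Sum>i\<le>n. (t ^ i) *\<^sub>R C i)"

definition monic_deg :: "(nat \<Rightarrow> real^2^2) \<Rightarrow> nat \<Rightarrow> bool" where
  "monic_deg C n \<longleftrightarrow> C n = mat 1"

definition orth_wrt :: "(real \<Rightarrow> real^2^2) \<Rightarrow> (real \<Rightarrow> real^2^2) \<Rightarrow> (real \<Rightarrow> real^2^2) \<Rightarrow> bool" where
  "orth_wrt W P Q \<longleftrightarrow> ((\<lambda>t. P t ** W t ** transpose (Q t)) has_integral 0) {0..1}"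

definition kth_deriv :: "nat \<Rightarrow> (real \<Rightarrow> real^2^2) \<Rightarrow> real \<Rightarrow> real^2^2" where
  "kth_deriv k f = ((\<lambda>g t. vector_derivative g (at t)) ^^ k) f"

end

theory Submission
  imports Defs
begin

(* Write W0 = Wmat a b v and W1 = Wmat (a+1) (b+1) v. They satisfy the Pearson equations
   W1 = W0 Phi and W1' = W0 Psi, where Phi and Psi are matrix polynomials of degree 2 and 1, and W1
   vanishes at 0 and 1. For a polynomial Q of degree j < n, integrating by parts therefore gives
     integral of P_(n+1)' W1 Q^T = - integral of P_(n+1) W0 (Psi Q^T + Phi Q'^T),
   and the right factor is the transpose of a polynomial of degree at most j + 1 <= n, so the integral
   vanishes by orthogonality of P_(n+1) to all polynomials of lower degree. Hence the normalized
   derivatives P_(n+1)' / (n+1) form a monic orthogonal family for W1, and k-fold iteration gives the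
   claim, since the k-th derivative of P_n is n!/(n-k)! times a monic polynomial of degree n - k. *)

lemma matrix_add_rdistrib:
  fixes A B :: "'a::semiring_1^'n^'m"
  shows "(A + B) ** C = A ** C + B ** C"
  by (vector matrix_matrix_mult_def sum.distrib[symmetric] field_simps)

lemma matrix_scaleR_right:
  fixes A :: "real^'n^'m"
  shows "A ** (c *\<^sub>R B) = c *\<^sub>R (A ** B)"
  by (simp add: matrix_scalar_ac scalar_matrix_assoc)

lemma matrix_scaleR_left:
  fixes A :: "real^'n^'m"
  shows "(c *\<^sub>R A) ** B = c *\<^sub>R (A ** B)"
  by (simp add: scalar_matrix_assoc)

lemma matrix_sum_ldistrib:
  fixes A :: "'a::semiring_1^'n^'m"
  shows "finite S \<Longrightarrow> A ** sum f S = (\<Sum>i\<in>S. A ** f i)"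
  by (induct S rule: finite_induct) (auto simp: matrix_add_ldistrib)

lemma matrix_sum_rdistrib:
  fixes f :: "_ \<Rightarrow> 'a::semiring_1^'n^'m"
  shows "finite S \<Longrightarrow> sum f S ** A = (\<Sum>i\<in>S. f i ** A)"
  by (induct S rule: finite_induct) (auto simp: matrix_add_rdistrib)

lemma transpose_add: "transpose (A + B) = transpose A + transpose (B :: 'a::semiring_1^'n^'m)"
  by (vector transpose_def)

lemma transpose_zero [simp]: "transpose (0 :: 'a::semiring_1^'n^'m) = 0"
  by (vector transpose_def)

lemma transpose_sum:
  fixes f :: "_ \<Rightarrow> 'a::semiring_1^'n^'m"
  shows "finite S \<Longrightarrow> transpose (sum f S) = (\<Sum>i\<in>S. transpose (f i))"
  by (induct S rule: finite_induct) (auto simp: transpose_add)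

lemma bounded_bilinear_matrix_mult:
  "bounded_bilinear ((**) :: real^'n^'m \<Rightarrow> real^'p^'n \<Rightarrow> real^'p^'m)"
proof -
  have "bilinear ((**) :: real^'n^'m \<Rightarrow> real^'p^'n \<Rightarrow> real^'p^'m)"
    unfolding bilinear_def
    by (auto intro!: linearI simp: matrix_add_ldistrib matrix_add_rdistrib matrix_scaleR_left matrix_scaleR_right)
  then show ?thesis
    by (rule bilinear_conv_bounded_bilinear[THEN iffD1])
qed

lemma bounded_linear_transpose: "bounded_linear (transpose :: real^'n^'m \<Rightarrow> real^'m^'n)"
  by (auto intro!: linear_conv_bounded_linear[THEN iffD1] linearI simp: transpose_add transpose_scalar)

lemma mat2_eq_iff: "mat2 a b c d = mat2 a' b' c' d' \<longleftrightarrow> a = a' \<and> b = b' \<and> c = c' \<and> d = d'"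
  by (auto simp: mat2_def vec_eq_iff forall_2)

lemma mat2_mult: "mat2 a b c d ** mat2 e f g h = mat2 (a*e + b*g) (a*f + b*h) (c*e + d*g) (c*f + d*h)"
  by (simp add: mat2_def matrix_matrix_mult_def vec_eq_iff forall_2 sum_2)

lemma mat2_add: "mat2 a b c d + mat2 e f g h = mat2 (a + e) (b + f) (c + g) (d + h)"
  by (simp add: mat2_def vec_eq_iff forall_2)

lemma scaleR_mat2: "r *\<^sub>R mat2 a b c d = mat2 (r*a) (r*b) (r*c) (r*d)"
  by (simp add: mat2_def vec_eq_iff forall_2)

lemma transpose_mat2: "transpose (mat2 a b c d) = mat2 a c b d"
  by (simp add: mat2_def transpose_def vec_eq_iff forall_2)

lemma has_vector_derivative_mat2:
  assumes "(f has_real_derivative f') (at x within S)" "(g has_real_derivative g') (at x within S)"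
    and "(h has_real_derivative h') (at x within S)" "(k has_real_derivative k') (at x within S)"
  shows "((\<lambda>t. mat2 (f t) (g t) (h t) (k t)) has_vector_derivative mat2 f' g' h' k') (at x within S)"
proof -
  have split: "mat2 x y z w = x *\<^sub>R mat2 1 0 0 0 + y *\<^sub>R mat2 0 1 0 0 + z *\<^sub>R mat2 0 0 1 0 + w *\<^sub>R mat2 0 0 0 1"
    for x y z w by (simp add: scaleR_mat2 mat2_add)
  show ?thesis
    unfolding split[of "f _"] split[of f']
    by (auto intro!: derivative_eq_intros assms)
qed

section \<open>Matrix polynomials\<close>

definition mpoly_deg_le :: "nat \<Rightarrow> (real \<Rightarrow> real^2^2) \<Rightarrow> bool" where
  "mpoly_deg_le d f \<longleftrightarrow> (\<exists>D. f = mpoly_eval D d)"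

lemma mpoly_deg_le_mpoly_eval [simp]: "mpoly_deg_le d (mpoly_eval D d)"
  unfolding mpoly_deg_le_def by blast

lemma mpoly_deg_le_add:
  assumes "mpoly_deg_le d f" "mpoly_deg_le d g"
  shows "mpoly_deg_le d (\<lambda>t. f t + g t)"
proof -
  obtain D E where "f = mpoly_eval D d" "g = mpoly_eval E d"
    using assms unfolding mpoly_deg_le_def by blast
  then have "(\<lambda>t. f t + g t) = mpoly_eval (\<lambda>i. D i + E i) d"
    by (simp add: fun_eq_iff mpoly_eval_def scaleR_add_right sum.distrib)
  then show ?thesis by simp
qed

lemma mpoly_deg_le_scaleR:
  assumes "mpoly_deg_le d f"
  shows "mpoly_deg_le d (\<lambda>t. c *\<^sub>R f t)"
proof -
  obtain D where "f = mpoly_eval D d" using assms unfolding mpoly_deg_le_def by blast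
  then have "(\<lambda>t. c *\<^sub>R f t) = mpoly_eval (\<lambda>i. c *\<^sub>R D i) d"
    by (simp add: fun_eq_iff mpoly_eval_def scaleR_sum_right mult.commute)
  then show ?thesis by simp
qed

lemma mpoly_deg_le_mult_const:
  assumes "mpoly_deg_le d f"
  shows "mpoly_deg_le d (\<lambda>t. f t ** A)"
proof -
  obtain D where "f = mpoly_eval D d" using assms unfolding mpoly_deg_le_def by blast
  then have "(\<lambda>t. f t ** A) = mpoly_eval (\<lambda>i. D i ** A) d"
    by (simp add: fun_eq_iff mpoly_eval_def matrix_sum_rdistrib matrix_scaleR_left)
  then show ?thesis by simp
qed

lemma mpoly_deg_le_transpose:
  assumes "mpoly_deg_le d f"
  shows "mpoly_deg_le d (\<lambda>t. transpose (f t))"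
proof -
  obtain D where "f = mpoly_eval D d" using assms unfolding mpoly_deg_le_def by blast
  then have "(\<lambda>t. transpose (f t)) = mpoly_eval (\<lambda>i. transpose (D i)) d"
    by (simp add: fun_eq_iff mpoly_eval_def transpose_sum transpose_scalar)
  then show ?thesis by simp
qed

lemma mpoly_deg_le_mono:
  assumes "mpoly_deg_le d f" "d \<le> e"
  shows "mpoly_deg_le e f"
proof -
  obtain D where D: "f = mpoly_eval D d" using assms unfolding mpoly_deg_le_def by blast
  define D' where "D' i = (if i \<le> d then D i else 0)" for i
  have "mpoly_eval D' e t = mpoly_eval D d t" for t
  proof -
    have "mpoly_eval D' e t = (\<Sum>i\<in>{..e} \<inter> {i. i \<le> d}. t ^ i *\<^sub>R D i)"
      unfolding mpoly_eval_def D'_def by (simp add: sum.inter_restrict if_distrib cong: if_cong)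
    also have "{..e} \<inter> {i. i \<le> d} = {..d}" using assms(2) by auto
    finally show ?thesis unfolding mpoly_eval_def .
  qed
  then show ?thesis unfolding mpoly_deg_le_def D by (metis ext)
qed

lemma mpoly_deg_le_times_var:
  assumes "mpoly_deg_le d f"
  shows "mpoly_deg_le (Suc d) (\<lambda>t. t *\<^sub>R f t)"
proof -
  obtain D where "f = mpoly_eval D d" using assms unfolding mpoly_deg_le_def by blast
  then have "(\<lambda>t. t *\<^sub>R f t) = mpoly_eval (\<lambda>i. if i = 0 then 0 else D (i - 1)) (Suc d)"
    by (simp add: fun_eq_iff mpoly_eval_def sum.atMost_Suc_shift scaleR_sum_right del: sum.atMost_Suc)
  then show ?thesis by simp
qed

lemma mpoly_deg_le_times_power:
  assumes "mpoly_deg_le d f"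
  shows "mpoly_deg_le (d + k) (\<lambda>t. t ^ k *\<^sub>R f t)"
proof (induction k)
  case 0
  then show ?case using assms by simp
next
  case (Suc k)
  then show ?case using mpoly_deg_le_times_var[OF Suc] by simp
qed

lemma mpoly_deg_le_mult:
  assumes "mpoly_deg_le d f" "mpoly_deg_le e g"
  shows "mpoly_deg_le (d + e) (\<lambda>t. f t ** g t)"
proof -
  obtain E where E: "g = mpoly_eval E e" using assms(2) unfolding mpoly_deg_le_def by blast
  have "mpoly_deg_le (d + e) (\<lambda>t. f t ** mpoly_eval E e t)"
  proof (induction e)
    case 0
    then show ?case using mpoly_deg_le_mult_const[OF assms(1)] by (simp add: mpoly_eval_def)
  next
    case (Suc e)
    have "mpoly_deg_le (d + Suc e) (\<lambda>t. t ^ Suc e *\<^sub>R (f t ** E (Suc e)))"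
      by (intro mpoly_deg_le_times_power mpoly_deg_le_mult_const assms(1))
    moreover have "mpoly_deg_le (d + Suc e) (\<lambda>t. f t ** mpoly_eval E e t)"
      using Suc mpoly_deg_le_mono by simp
    ultimately show ?case
      by (auto dest: mpoly_deg_le_add simp: mpoly_eval_def matrix_add_ldistrib matrix_scaleR_right)
  qed
  then show ?thesis using E by simp
qed

lemma mpoly_deg_le_linear: "mpoly_deg_le 1 (\<lambda>t. A + t *\<^sub>R B)"
proof -
  have "(\<lambda>t. A + t *\<^sub>R B) = mpoly_eval (nth [A, B]) 1"
    by (simp add: fun_eq_iff mpoly_eval_def)
  then show ?thesis by simp
qed

lemma mpoly_deg_le_quadratic: "mpoly_deg_le 2 (\<lambda>t. A + t *\<^sub>R B + t^2 *\<^sub>R C)"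
proof -
  have "(\<lambda>t. A + t *\<^sub>R B + t^2 *\<^sub>R C) = mpoly_eval (nth [A, B, C]) 2"
    by (simp add: fun_eq_iff mpoly_eval_def numeral_2_eq_2)
  then show ?thesis by simp
qed

definition mpoly_deriv_coeffs :: "(nat \<Rightarrow> real^2^2) \<Rightarrow> nat \<Rightarrow> real^2^2" where
  "mpoly_deriv_coeffs D i = real (Suc i) *\<^sub>R D (Suc i)"

lemma mpoly_eval_scaleR: "mpoly_eval (\<lambda>i. c *\<^sub>R D i) d t = c *\<^sub>R mpoly_eval D d t"
  unfolding mpoly_eval_def by (simp add: scaleR_sum_right mult.commute)

lemma mpoly_deriv_coeffs_scaleR: "mpoly_deriv_coeffs (\<lambda>i. c *\<^sub>R D i) = (\<lambda>i. c *\<^sub>R mpoly_deriv_coeffs D i)"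
  unfolding mpoly_deriv_coeffs_def by (simp add: fun_eq_iff mult.commute)

lemma has_vector_derivative_mpoly_eval:
  "(mpoly_eval D (Suc d) has_vector_derivative mpoly_eval (mpoly_deriv_coeffs D) d t) (at t)"
proof -
  have "((\<lambda>t. \<Sum>i\<le>Suc d. t ^ i *\<^sub>R D i) has_vector_derivative
          (\<Sum>i\<le>Suc d. (real i * t ^ (i - 1)) *\<^sub>R D i)) (at t)"
    by (rule has_vector_derivative_sum) (auto intro!: derivative_eq_intros)
  also have "(\<Sum>i\<le>Suc d. (real i * t ^ (i - 1)) *\<^sub>R D i) = mpoly_eval (mpoly_deriv_coeffs D) d t"
    unfolding mpoly_eval_def mpoly_deriv_coeffs_def
    by (simp add: sum.atMost_Suc_shift mult.commute del: sum.atMost_Suc)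
  finally show ?thesis unfolding mpoly_eval_def .
qed

lemma vector_derivative_mpoly_eval:
  "vector_derivative (mpoly_eval D (Suc d)) (at t) = mpoly_eval (mpoly_deriv_coeffs D) d t"
  using has_vector_derivative_mpoly_eval vector_derivative_at by blast

lemma kth_deriv_mpoly_eval:
  "kth_deriv k (mpoly_eval D (d + k)) = mpoly_eval ((mpoly_deriv_coeffs ^^ k) D) d"
proof (induction k arbitrary: D)
  case 0
  then show ?case unfolding kth_deriv_def by simp
next
  case (Suc k)
  have "kth_deriv (Suc k) (mpoly_eval D (d + Suc k))
      = kth_deriv k (\<lambda>t. vector_derivative (mpoly_eval D (Suc (d + k))) (at t))"
    unfolding kth_deriv_def funpow_Suc_right by simp
  also have "\<dots> = mpoly_eval ((mpoly_deriv_coeffs ^^ k) (mpoly_deriv_coeffs D)) d"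
    unfolding vector_derivative_mpoly_eval Suc.IH[symmetric] by simp
  finally show ?case by (simp only: funpow_Suc_right comp_def)
qed

lemma mpoly_deg_le_has_vector_derivative:
  assumes "mpoly_deg_le (Suc d) f"
  obtains f' where "\<And>t. (f has_vector_derivative f' t) (at t)" and "mpoly_deg_le d f'"
  using assms has_vector_derivative_mpoly_eval mpoly_deg_le_mpoly_eval
  unfolding mpoly_deg_le_def by metis

lemma mpoly_deg_le_0_has_vector_derivative:
  assumes "mpoly_deg_le 0 f"
  shows "(f has_vector_derivative 0) (at t)"
  using assms unfolding mpoly_deg_le_def mpoly_eval_def by auto

lemma continuous_on_mpoly_eval: "continuous_on S (mpoly_eval D d)"
  unfolding mpoly_eval_def by (intro continuous_intros)

section \<open>Monic orthogonal families\<close>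

definition monic_orthogonal :: "(real \<Rightarrow> real^2^2) \<Rightarrow> (nat \<Rightarrow> nat \<Rightarrow> real^2^2) \<Rightarrow> bool" where
  "monic_orthogonal W E \<longleftrightarrow> (\<forall>j. monic_deg (E j) j) \<and>
     (\<forall>i j. i \<noteq> j \<longrightarrow> orth_wrt W (mpoly_eval (E i) i) (mpoly_eval (E j) j))"

lemma orth_wrt_scaleR:
  assumes "orth_wrt W P Q"
  shows "orth_wrt W (\<lambda>t. c *\<^sub>R P t) (\<lambda>t. d *\<^sub>R Q t)"
  using has_integral_cmul[OF assms[unfolded orth_wrt_def], of "c * d"]
  unfolding orth_wrt_def by (simp add: transpose_scalar matrix_scaleR_left matrix_scaleR_right mult.commute)

lemma orth_wrt_mult_left:
  assumes "orth_wrt W P Q"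
  shows "orth_wrt W P (\<lambda>t. A ** Q t)"
proof -
  have "((\<lambda>t. (P t ** W t ** transpose (Q t)) ** transpose A) has_integral 0 ** transpose A) {0..1}"
    using has_integral_linear[OF assms[unfolded orth_wrt_def]
        bounded_bilinear.bounded_linear_left[OF bounded_bilinear_matrix_mult]]
    by (simp add: o_def)
  then show ?thesis
    unfolding orth_wrt_def by (simp add: matrix_transpose_mul matrix_mul_assoc)
qed

lemma orth_wrt_sum:
  assumes "finite S" "\<And>j. j \<in> S \<Longrightarrow> orth_wrt W P (Q j)"
  shows "orth_wrt W P (\<lambda>t. \<Sum>j\<in>S. Q j t)"
  using has_integral_sum[OF assms(1), of "\<lambda>j t. P t ** W t ** transpose (Q j t)" "\<lambda>_. 0"] assms(2)
  unfolding orth_wrt_def by (simp add: transpose_sum assms(1) matrix_sum_ldistrib)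

lemma orth_wrt_sym:
  assumes "\<And>t. transpose (W t) = W t" and "orth_wrt W P Q"
  shows "orth_wrt W Q P"
proof -
  have "((transpose \<circ> (\<lambda>t. P t ** W t ** transpose (Q t))) has_integral transpose 0) {0..1}"
    using has_integral_linear[OF assms(2)[unfolded orth_wrt_def] bounded_linear_transpose] .
  moreover have "transpose \<circ> (\<lambda>t. P t ** W t ** transpose (Q t)) = (\<lambda>t. Q t ** W t ** transpose (P t))"
    by (auto simp: matrix_transpose_mul assms(1) matrix_mul_assoc)
  ultimately show ?thesis unfolding orth_wrt_def by simp
qed

lemma mpoly_eval_monic_basis:
  assumes "\<And>j. monic_deg (E j) j"
  shows "\<exists>A. \<forall>t. mpoly_eval D d t = (\<Sum>j\<le>d. A j ** mpoly_eval (E j) j t)"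
proof (induction d arbitrary: D)
  case 0
  have "E 0 0 = mat 1" using assms[of 0] unfolding monic_deg_def .
  then show ?case unfolding mpoly_eval_def by (intro exI[of _ "\<lambda>j. D 0"]) simp
next
  case (Suc d)
  \<comment> \<open>Subtracting the leading coefficient times the monic E (Suc d) lowers the degree.\<close>
  define c where "c = D (Suc d)"
  define D' where "D' i = D i - c ** E (Suc d) i" for i
  have lead: "E (Suc d) (Suc d) = mat 1" using assms[of "Suc d"] unfolding monic_deg_def .
  have split: "mpoly_eval D (Suc d) t = mpoly_eval D' d t + c ** mpoly_eval (E (Suc d)) (Suc d) t" for t
  proof -
    have "c ** mpoly_eval (E (Suc d)) (Suc d) t = (\<Sum>i\<le>Suc d. t ^ i *\<^sub>R (c ** E (Suc d) i))"
      unfolding mpoly_eval_def by (simp add: matrix_sum_ldistrib matrix_scaleR_right del: sum.atMost_Suc)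
    then show ?thesis
      unfolding mpoly_eval_def D'_def by (simp add: lead c_def scaleR_diff_right sum_subtractf)
  qed
  obtain A where A: "\<And>t. mpoly_eval D' d t = (\<Sum>j\<le>d. A j ** mpoly_eval (E j) j t)"
    using Suc.IH by blast
  have "(\<Sum>j\<le>d. (A(Suc d := c)) j ** mpoly_eval (E j) j t) = (\<Sum>j\<le>d. A j ** mpoly_eval (E j) j t)"
    for t by (rule sum.cong) auto
  then have "mpoly_eval D (Suc d) t = (\<Sum>j\<le>Suc d. (A(Suc d := c)) j ** mpoly_eval (E j) j t)" for t
    by (simp add: split A)
  then show ?case by blast
qed

lemma orth_wrt_lower_degree:
  assumes "monic_orthogonal W E" and "mpoly_deg_le d R" and "d < n"
  shows "orth_wrt W (mpoly_eval (E n) n) R"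
proof -
  have monic: "\<And>j. monic_deg (E j) j"
    and orth: "\<And>j. j \<noteq> n \<Longrightarrow> orth_wrt W (mpoly_eval (E n) n) (mpoly_eval (E j) j)"
    using assms(1) unfolding monic_orthogonal_def by auto
  obtain D where R: "R = mpoly_eval D d" using assms(2) unfolding mpoly_deg_le_def by blast
  obtain A where A: "\<And>t. mpoly_eval D d t = (\<Sum>j\<le>d. A j ** mpoly_eval (E j) j t)"
    using mpoly_eval_monic_basis[OF monic] by blast
  have "orth_wrt W (mpoly_eval (E n) n) (\<lambda>t. A j ** mpoly_eval (E j) j t)" if "j \<le> d" for j
    using orth_wrt_mult_left[OF orth] that assms(3) by simp
  then have "orth_wrt W (mpoly_eval (E n) n) (\<lambda>t. \<Sum>j\<le>d. A j ** mpoly_eval (E j) j t)"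
    using orth_wrt_sum[of "{..d}" W _ "\<lambda>j t. A j ** mpoly_eval (E j) j t"] by simp
  then show ?thesis unfolding R A[abs_def] .
qed

section \<open>The weight and its Pearson equations\<close>

definition weight_poly :: "real \<Rightarrow> real \<Rightarrow> real \<Rightarrow> real \<Rightarrow> real^2^2" where
  "weight_poly a b v t = mat2 (v * (a + v + b + 2) / (a + v - b) * t^2 - (a + v + b + 2) * t + (a + 1))
     ((a + b + 2) * t - (a + 1))
     ((a + b + 2) * t - (a + 1))
     (- v * (a - v + b + 2) / (a - v - b) * t^2 - (a - v + b + 2) * t + (a + 1))"

definition weight_poly_deriv :: "real \<Rightarrow> real \<Rightarrow> real \<Rightarrow> real \<Rightarrow> real^2^2" where
  "weight_poly_deriv a b v t = mat2 (2 * (v * (a + v + b + 2) / (a + v - b)) * t - (a + v + b + 2))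
     (a + b + 2)
     (a + b + 2)
     (2 * (- v * (a - v + b + 2) / (a - v - b)) * t - (a - v + b + 2))"

lemma Wmat_eq_scaleR_weight_poly: "Wmat a b v t = (t powr a * (1 - t) powr b) *\<^sub>R weight_poly a b v t"
  unfolding Wmat_def weight_poly_def ..

lemma has_real_derivative_quadratic:
  "((\<lambda>t. p * t^2 - q * t + r) has_real_derivative 2 * p * x - q) (at x)"
  by (auto intro!: derivative_eq_intros)

lemma has_vector_derivative_weight_poly:
  "(weight_poly a b v has_vector_derivative weight_poly_deriv a b v t) (at t)"
  unfolding weight_poly_def[abs_def] weight_poly_deriv_def
  by (rule has_vector_derivative_mat2[OF has_real_derivative_quadratic _ _ has_real_derivative_quadratic])
     (auto intro!: derivative_eq_intros)

lemma transpose_weight_poly: "transpose (weight_poly a b v t) = weight_poly a b v t"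
  unfolding weight_poly_def transpose_mat2 ..

lemma transpose_Wmat: "transpose (Wmat a b v t) = Wmat a b v t"
  by (simp add: Wmat_eq_scaleR_weight_poly transpose_scalar transpose_weight_poly)

lemma continuous_on_Wmat:
  assumes "a > 0" "b > 0"
  shows "continuous_on {0..1} (Wmat a b v)"
proof -
  have powr: "continuous_on {0..1} (\<lambda>t::real. t powr a)" "continuous_on {0..1} (\<lambda>t::real. (1 - t) powr b)"
    by (rule continuous_on_powr'; use assms in \<open>auto intro: continuous_intros\<close>)+
  have poly: "continuous_on {0..1} (weight_poly a b v)"
    by (rule continuous_on_vector_derivative)
       (rule has_vector_derivative_at_within[OF has_vector_derivative_weight_poly])
  show ?thesis
    unfolding Wmat_eq_scaleR_weight_poly[abs_def] by (intro continuous_on_scaleR continuous_on_mult powr poly)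
qed

lemma has_real_derivative_jacobi_weight:
  fixes a b x :: real
  assumes "0 < x" "x < 1"
  shows "((\<lambda>t. t powr (a + 1) * (1 - t) powr (b + 1)) has_real_derivative
     (x powr a * (1 - x) powr b) * ((a + 1) * (1 - x) - (b + 1) * x)) (at x)"
proof -
  have left: "((\<lambda>t. t powr (a + 1)) has_real_derivative (a + 1) * x powr a) (at x)"
    using has_real_derivative_powr[OF assms(1), of "a + 1"] by simp
  have right: "((\<lambda>t. (1 - t) powr (b + 1)) has_real_derivative (b + 1) * (1 - x) powr b * (-1)) (at x)"
  proof -
    have "((\<lambda>z. z powr (b + 1)) has_real_derivative (b + 1) * (1 - x) powr b) (at (1 - x))"
      using has_real_derivative_powr[of "1 - x" "b + 1"] assms by simp
    moreover have "((\<lambda>t. 1 - t) has_real_derivative -1) (at x)"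
      by (auto intro!: derivative_eq_intros)
    ultimately show ?thesis using DERIV_chain2 by blast
  qed
  have "((\<lambda>t. t powr (a + 1) * (1 - t) powr (b + 1)) has_real_derivative
     x powr (a + 1) * ((b + 1) * (1 - x) powr b * (-1)) + (a + 1) * x powr a * (1 - x) powr (b + 1)) (at x)"
    using DERIV_mult[OF left right] by (simp add: algebra_simps)
  moreover have "x powr (a + 1) = x powr a * x" "(1 - x) powr (b + 1) = (1 - x) powr b * (1 - x)"
    using assms by (simp_all add: powr_add)
  then have "x powr (a + 1) * ((b + 1) * (1 - x) powr b * (-1)) + (a + 1) * x powr a * (1 - x) powr (b + 1)
      = (x powr a * (1 - x) powr b) * ((a + 1) * (1 - x) - (b + 1) * x)"
    by (simp only:) (simp add: algebra_simps)
  ultimately show ?thesis by simp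
qed

text \<open>The matrices Phi and Psi of the Pearson equations Wmat (a+1) (b+1) v = Wmat a b v Phi and
  (Wmat (a+1) (b+1) v)' = Wmat a b v Psi.\<close>

definition pearson_phi_num :: "real \<Rightarrow> real \<Rightarrow> real \<Rightarrow> real \<Rightarrow> real^2^2" where
  "pearson_phi_num a b v t =
     mat2 (- ((a+v-b) * (a-v-b))) ((a+v-b) * (a-v-b)) (- ((a+v-b) * (a-v-b))) ((a+v-b) * (a-v-b))
   + t *\<^sub>R mat2 (v * (a+b+2-v) * (a+b+4+v)) (2 * v * (a+v-b)) (2 * v * (a-v-b)) (v * (a+b+2+v) * (a+b+4-v))
   + t^2 *\<^sub>R mat2 (- (v * (a+b+2-v) * (a+b+4+v))) 0 0 (- (v * (a+b+2+v) * (a+b+4-v)))"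

definition pearson_psi_num :: "real \<Rightarrow> real \<Rightarrow> real \<Rightarrow> real \<Rightarrow> real^2^2" where
  "pearson_psi_num a b v t =
     mat2 ((a+b+2-v) * (a+b+4+v) * (2 * v + b - a + a * v)) ((a+v-b) * (a+b+4) * (a+b+2+v))
          (- ((a-v-b) * (a+b+4) * (a+b+2-v))) ((a+b+2+v) * (a+b+4-v) * (2 * v - b + a + a * v))
   + t *\<^sub>R mat2 (- ((a+b+2-v) * (a+b+4+v) * v * (a+b+4))) 0 0 (- ((a+b+2+v) * (a+b+4-v) * v * (a+b+4)))"

definition pearson_phi :: "real \<Rightarrow> real \<Rightarrow> real \<Rightarrow> real \<Rightarrow> real^2^2" where
  "pearson_phi a b v t = (1 / (v * (a+b+2+v) * (a+b+2-v))) *\<^sub>R pearson_phi_num a b v t"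

definition pearson_psi :: "real \<Rightarrow> real \<Rightarrow> real \<Rightarrow> real \<Rightarrow> real^2^2" where
  "pearson_psi a b v t = (1 / (v * (a+b+2+v) * (a+b+2-v))) *\<^sub>R pearson_psi_num a b v t"

text \<open>weight_poly and its derivative multiplied by (a + v - b) (a - v - b), which clears all
  denominators, so that the Pearson equations become polynomial identities.\<close>

definition weight_poly_cleared :: "real \<Rightarrow> real \<Rightarrow> real \<Rightarrow> real \<Rightarrow> real^2^2" where
  "weight_poly_cleared a b v t = mat2
     ((a-v-b) * (v * (a+v+b+2) * t^2 - (a+v-b) * (a+v+b+2) * t + (a+v-b) * (a+1)))
     ((a+v-b) * (a-v-b) * ((a+b+2) * t - (a+1)))
     ((a+v-b) * (a-v-b) * ((a+b+2) * t - (a+1)))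
     ((a+v-b) * (- v * (a-v+b+2) * t^2 - (a-v-b) * (a-v+b+2) * t + (a-v-b) * (a+1)))"

definition weight_poly_deriv_cleared :: "real \<Rightarrow> real \<Rightarrow> real \<Rightarrow> real \<Rightarrow> real^2^2" where
  "weight_poly_deriv_cleared a b v t = mat2
     ((a-v-b) * (2 * v * (a+v+b+2) * t - (a+v-b) * (a+v+b+2)))
     ((a+v-b) * (a-v-b) * (a+b+2))
     ((a+v-b) * (a-v-b) * (a+b+2))
     ((a+v-b) * (- 2 * v * (a-v+b+2) * t - (a-v-b) * (a-v+b+2)))"

lemma weight_poly_cleared_eq:
  assumes "a + v - b \<noteq> 0" "a - v - b \<noteq> 0"
  shows "weight_poly_cleared a b v t = ((a + v - b) * (a - v - b)) *\<^sub>R weight_poly a b v t"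
  using assms unfolding weight_poly_cleared_def weight_poly_def scaleR_mat2 mat2_eq_iff
  by (simp add: field_simps)

lemma weight_poly_deriv_cleared_eq:
  assumes "a + v - b \<noteq> 0" "a - v - b \<noteq> 0"
  shows "weight_poly_deriv_cleared a b v t = ((a + v - b) * (a - v - b)) *\<^sub>R weight_poly_deriv a b v t"
  using assms unfolding weight_poly_deriv_cleared_def weight_poly_deriv_def scaleR_mat2 mat2_eq_iff
  by (simp add: field_simps)

lemma weight_poly_cleared_pearson_phi:
  "(v * (a+b+2+v) * (a+b+2-v) * (t * (1 - t))) *\<^sub>R weight_poly_cleared (a+1) (b+1) v t
     = weight_poly_cleared a b v t ** pearson_phi_num a b v t"
  unfolding weight_poly_cleared_def pearson_phi_num_def mat2_add scaleR_mat2 mat2_mult mat2_eq_iff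
  by (intro conjI; algebra)

lemma weight_poly_cleared_pearson_psi:
  "(v * (a+b+2+v) * (a+b+2-v)) *\<^sub>R (((a+1) * (1-t) - (b+1) * t) *\<^sub>R weight_poly_cleared (a+1) (b+1) v t
     + (t * (1 - t)) *\<^sub>R weight_poly_deriv_cleared (a+1) (b+1) v t)
     = weight_poly_cleared a b v t ** pearson_psi_num a b v t"
  unfolding weight_poly_cleared_def weight_poly_deriv_cleared_def pearson_psi_num_def
    mat2_add scaleR_mat2 mat2_mult mat2_eq_iff
  by (intro conjI; algebra)

lemma weight_poly_pearson_phi:
  assumes "\<bar>a - b\<bar> < \<bar>v\<bar>" "\<bar>v\<bar> < a + b + 2"
  shows "(t * (1 - t)) *\<^sub>R weight_poly (a+1) (b+1) v t = weight_poly a b v t ** pearson_phi a b v t"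
proof -
  define K where "K = (a + v - b) * (a - v - b)"
  define c where "c = v * (a+b+2+v) * (a+b+2-v)"
  have nz: "a + v - b \<noteq> 0" "a - v - b \<noteq> 0" "K \<noteq> 0" "c \<noteq> 0"
    using assms unfolding K_def c_def by auto
  have cleared: "weight_poly_cleared (a+1) (b+1) v t = K *\<^sub>R weight_poly (a+1) (b+1) v t"
    "weight_poly_cleared a b v t = K *\<^sub>R weight_poly a b v t"
    using weight_poly_cleared_eq[of "a+1" v "b+1" t] weight_poly_cleared_eq[of a v b t] nz
    unfolding K_def by (simp_all add: algebra_simps)
  have "K *\<^sub>R ((c * (t * (1 - t))) *\<^sub>R weight_poly (a+1) (b+1) v t)
      = K *\<^sub>R (weight_poly a b v t ** pearson_phi_num a b v t)"
    using weight_poly_cleared_pearson_phi[of v a b t]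
    unfolding cleared c_def[symmetric] by (simp add: matrix_scaleR_left mult_ac)
  then have scaled: "(c * (t * (1 - t))) *\<^sub>R weight_poly (a+1) (b+1) v t
      = weight_poly a b v t ** pearson_phi_num a b v t"
    using nz(3) scaleR_cancel_left by blast
  show ?thesis
    unfolding pearson_phi_def c_def[symmetric] matrix_scaleR_right scaled[symmetric] using nz(4) by simp
qed

lemma weight_poly_pearson_psi:
  assumes "\<bar>a - b\<bar> < \<bar>v\<bar>" "\<bar>v\<bar> < a + b + 2"
  shows "((a+1) * (1-t) - (b+1) * t) *\<^sub>R weight_poly (a+1) (b+1) v t
      + (t * (1 - t)) *\<^sub>R weight_poly_deriv (a+1) (b+1) v t = weight_poly a b v t ** pearson_psi a b v t"
    (is "?lhs = _")
proof -
  define K where "K = (a + v - b) * (a - v - b)"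
  define c where "c = v * (a+b+2+v) * (a+b+2-v)"
  have nz: "a + v - b \<noteq> 0" "a - v - b \<noteq> 0" "K \<noteq> 0" "c \<noteq> 0"
    using assms unfolding K_def c_def by auto
  have cleared: "weight_poly_cleared (a+1) (b+1) v t = K *\<^sub>R weight_poly (a+1) (b+1) v t"
    "weight_poly_deriv_cleared (a+1) (b+1) v t = K *\<^sub>R weight_poly_deriv (a+1) (b+1) v t"
    "weight_poly_cleared a b v t = K *\<^sub>R weight_poly a b v t"
    using weight_poly_cleared_eq[of "a+1" v "b+1" t] weight_poly_deriv_cleared_eq[of "a+1" v "b+1" t]
      weight_poly_cleared_eq[of a v b t] nz
    unfolding K_def by (simp_all add: algebra_simps)
  have "K *\<^sub>R (c *\<^sub>R ?lhs) = K *\<^sub>R (weight_poly a b v t ** pearson_psi_num a b v t)"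
    using weight_poly_cleared_pearson_psi[of v a b t]
    unfolding cleared c_def[symmetric] by (simp add: matrix_scaleR_left scaleR_add_right mult_ac)
  then have scaled: "c *\<^sub>R ?lhs = weight_poly a b v t ** pearson_psi_num a b v t"
    using nz(3) scaleR_cancel_left by blast
  show ?thesis
    unfolding pearson_psi_def c_def[symmetric] matrix_scaleR_right scaled[symmetric] using nz(4) by simp
qed

lemma Wmat_pearson_phi:
  assumes "\<bar>a - b\<bar> < \<bar>v\<bar>" "\<bar>v\<bar> < a + b + 2" and "0 < t" "t < 1"
  shows "Wmat (a+1) (b+1) v t = Wmat a b v t ** pearson_phi a b v t"
proof -
  have "t powr (a+1) * (1 - t) powr (b+1) = (t powr a * (1 - t) powr b) * (t * (1 - t))"
    using assms(3,4) by (simp add: powr_add)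
  then show ?thesis
    unfolding Wmat_eq_scaleR_weight_poly matrix_scaleR_left weight_poly_pearson_phi[OF assms(1,2), symmetric]
    by simp
qed

lemma has_vector_derivative_Wmat_pearson_psi:
  assumes "\<bar>a - b\<bar> < \<bar>v\<bar>" "\<bar>v\<bar> < a + b + 2" and "0 < t" "t < 1"
  shows "(Wmat (a+1) (b+1) v has_vector_derivative Wmat a b v t ** pearson_psi a b v t) (at t)"
proof -
  define w where "w = t powr a * (1 - t) powr b"
  have "((\<lambda>s. (s powr (a+1) * (1 - s) powr (b+1)) *\<^sub>R weight_poly (a+1) (b+1) v s) has_vector_derivative
      (t powr (a+1) * (1 - t) powr (b+1)) *\<^sub>R weight_poly_deriv (a+1) (b+1) v t
      + (w * ((a+1) * (1-t) - (b+1) * t)) *\<^sub>R weight_poly (a+1) (b+1) v t) (at t)"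
    unfolding w_def
    by (rule has_vector_derivative_scaleR[OF has_real_derivative_jacobi_weight[OF assms(3,4)]
          has_vector_derivative_weight_poly])
  moreover have "t powr (a+1) * (1 - t) powr (b+1) = w * (t * (1 - t))"
    using assms(3,4) unfolding w_def by (simp add: powr_add)
  ultimately have "(Wmat (a+1) (b+1) v has_vector_derivative
      w *\<^sub>R (((a+1) * (1-t) - (b+1) * t) *\<^sub>R weight_poly (a+1) (b+1) v t
        + (t * (1 - t)) *\<^sub>R weight_poly_deriv (a+1) (b+1) v t)) (at t)"
    unfolding Wmat_eq_scaleR_weight_poly[abs_def] by (simp add: scaleR_add_right add.commute)
  then show ?thesis
    unfolding weight_poly_pearson_psi[OF assms(1,2)] Wmat_eq_scaleR_weight_poly matrix_scaleR_left w_def .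
qed

section \<open>Derivatives of a monic orthogonal family\<close>

lemma mpoly_deg_le_transpose_pearson_psi: "mpoly_deg_le 1 (\<lambda>t. transpose (pearson_psi a b v t))"
  unfolding pearson_psi_def pearson_psi_num_def
  by (intro mpoly_deg_le_transpose mpoly_deg_le_scaleR mpoly_deg_le_linear)

lemma mpoly_deg_le_transpose_pearson_phi: "mpoly_deg_le 2 (\<lambda>t. transpose (pearson_phi a b v t))"
  unfolding pearson_phi_def pearson_phi_num_def
  by (intro mpoly_deg_le_transpose mpoly_deg_le_scaleR mpoly_deg_le_quadratic)

lemma mpoly_deg_le_pearson_remainder:
  assumes "mpoly_deg_le j Q"
  obtains Q' where "\<And>t. (Q has_vector_derivative Q' t) (at t)"
    and "mpoly_deg_le (Suc j)
      (\<lambda>t. Q t ** transpose (pearson_psi a b v t) + Q' t ** transpose (pearson_phi a b v t))"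
proof (cases j)
  case 0
  \<comment> \<open>Here Q' = 0; the generic bound for the Phi term would only give degree 2.\<close>
  have "mpoly_deg_le (Suc j) (\<lambda>t. Q t ** transpose (pearson_psi a b v t))"
    using mpoly_deg_le_mult[OF assms mpoly_deg_le_transpose_pearson_psi] by simp
  then show ?thesis
    using that[of "\<lambda>t. 0"] mpoly_deg_le_0_has_vector_derivative assms 0 by simp
next
  case (Suc i)
  obtain Q' where Q': "\<And>t. (Q has_vector_derivative Q' t) (at t)" "mpoly_deg_le i Q'"
    using mpoly_deg_le_has_vector_derivative assms Suc by metis
  have "mpoly_deg_le (Suc j) (\<lambda>t. Q t ** transpose (pearson_psi a b v t))"
    using mpoly_deg_le_mult[OF assms mpoly_deg_le_transpose_pearson_psi] by simp
  moreover have "mpoly_deg_le (Suc j) (\<lambda>t. Q' t ** transpose (pearson_phi a b v t))"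
    using mpoly_deg_le_mult[OF Q'(2) mpoly_deg_le_transpose_pearson_phi] Suc by simp
  ultimately show ?thesis
    using that[OF Q'(1)] mpoly_deg_le_add by blast
qed

lemma has_vector_derivative_Wmat_mult_transpose:
  assumes "\<bar>a - b\<bar> < \<bar>v\<bar>" "\<bar>v\<bar> < a + b + 2" and "0 < x" "x < 1"
    and "(Q has_vector_derivative Q') (at x)"
  shows "((\<lambda>t. Wmat (a+1) (b+1) v t ** transpose (Q t)) has_vector_derivative
      Wmat a b v x ** transpose (Q x ** transpose (pearson_psi a b v x) + Q' ** transpose (pearson_phi a b v x)))
      (at x)"
proof -
  have "((\<lambda>t. transpose (Q t)) has_vector_derivative transpose Q') (at x)"
    using bounded_linear.has_vector_derivative[OF bounded_linear_transpose assms(5)] .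
  from bounded_bilinear.has_vector_derivative[OF bounded_bilinear_matrix_mult
      has_vector_derivative_Wmat_pearson_psi[OF assms(1-4)] this]
  show ?thesis
    unfolding Wmat_pearson_phi[OF assms(1-4)]
    by (simp add: transpose_add matrix_transpose_mul matrix_add_ldistrib matrix_mul_assoc add.commute)
qed

lemma orth_wrt_Wmat_succ_derivative:
  fixes a b v :: real
  assumes "a > -1" "b > -1" "\<bar>a - b\<bar> < \<bar>v\<bar>" "\<bar>v\<bar> < a + b + 2"
    and "monic_orthogonal (Wmat a b v) E" and "mpoly_deg_le j Q" and "j < n"
  shows "orth_wrt (Wmat (a+1) (b+1) v) (mpoly_eval (mpoly_deriv_coeffs (E (Suc n))) n) Q"
proof -
  define P where "P = mpoly_eval (E (Suc n)) (Suc n)"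
  define P' where "P' = mpoly_eval (mpoly_deriv_coeffs (E (Suc n))) n"
  obtain Q' where hQ: "\<And>t. (Q has_vector_derivative Q' t) (at t)"
    and deg_R: "mpoly_deg_le (Suc j)
      (\<lambda>t. Q t ** transpose (pearson_psi a b v t) + Q' t ** transpose (pearson_phi a b v t))"
    using mpoly_deg_le_pearson_remainder[OF assms(6), where a=a and b=b and v=v] by blast
  define R where "R t = Q t ** transpose (pearson_psi a b v t) + Q' t ** transpose (pearson_phi a b v t)" for t
  define f where "f t = P t ** (Wmat (a+1) (b+1) v t ** transpose (Q t))" for t
  have by_parts: "((\<lambda>t. P' t ** Wmat (a+1) (b+1) v t ** transpose (Q t) + P t ** Wmat a b v t ** transpose (R t))
      has_integral f 1 - f 0) {0..1}"
  proof (rule fundamental_theorem_of_calculus_interior)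
    have "continuous_on {0..1} Q"
      by (rule continuous_on_vector_derivative) (rule has_vector_derivative_at_within[OF hQ])
    moreover have "continuous_on {0..1} (Wmat (a+1) (b+1) v)"
      using assms(1,2) by (intro continuous_on_Wmat) auto
    ultimately show "continuous_on {0..1} f"
      unfolding f_def P_def
      by (intro bounded_bilinear.continuous_on[OF bounded_bilinear_matrix_mult] continuous_on_mpoly_eval
          bounded_linear.continuous_on[OF bounded_linear_transpose])
    fix x :: real assume "x \<in> {0<..<1}"
    from bounded_bilinear.has_vector_derivative[OF bounded_bilinear_matrix_mult
        has_vector_derivative_mpoly_eval has_vector_derivative_Wmat_mult_transpose[OF assms(3,4) _ _ hQ]]
    show "(f has_vector_derivative
        P' x ** Wmat (a+1) (b+1) v x ** transpose (Q x) + P x ** Wmat a b v x ** transpose (R x)) (at x)"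
      using \<open>x \<in> {0<..<1}\<close> unfolding f_def[abs_def] P_def P'_def R_def
      by (simp add: matrix_mul_assoc add.commute)
  qed simp
  have "f 0 = 0" "f 1 = 0"
    unfolding f_def Wmat_eq_scaleR_weight_poly by simp_all
  moreover have lower: "((\<lambda>t. P t ** Wmat a b v t ** transpose (R t)) has_integral 0) {0..1}"
    using orth_wrt_lower_degree[OF assms(5) deg_R] assms(7)
    unfolding orth_wrt_def P_def R_def by simp
  moreover note has_integral_diff[OF by_parts lower]
  ultimately have "((\<lambda>t. P' t ** Wmat (a+1) (b+1) v t ** transpose (Q t)) has_integral 0) {0..1}"
    by simp
  then show ?thesis
    unfolding orth_wrt_def P'_def .
qed

definition monic_derivatives :: "(nat \<Rightarrow> nat \<Rightarrow> real^2^2) \<Rightarrow> nat \<Rightarrow> nat \<Rightarrow> real^2^2" where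
  "monic_derivatives E j i = (1 / real (Suc j)) *\<^sub>R mpoly_deriv_coeffs (E (Suc j)) i"

lemma monic_orthogonal_monic_derivatives:
  fixes a b v :: real
  assumes "a > -1" "b > -1" "\<bar>a - b\<bar> < \<bar>v\<bar>" "\<bar>v\<bar> < a + b + 2"
    and "monic_orthogonal (Wmat a b v) E"
  shows "monic_orthogonal (Wmat (a+1) (b+1) v) (monic_derivatives E)"
proof -
  have "monic_deg (monic_derivatives E j) j" for j
    using assms(5) unfolding monic_orthogonal_def monic_deg_def monic_derivatives_def mpoly_deriv_coeffs_def
    by simp
  moreover have lower: "orth_wrt (Wmat (a+1) (b+1) v)
      (mpoly_eval (monic_derivatives E i) i) (mpoly_eval (monic_derivatives E j) j)" if "j < i" for i j
  proof -
    have "orth_wrt (Wmat (a+1) (b+1) v) (mpoly_eval (mpoly_deriv_coeffs (E (Suc i))) i)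
        (mpoly_eval (monic_derivatives E j) j)"
      using orth_wrt_Wmat_succ_derivative[OF assms mpoly_deg_le_mpoly_eval that] .
    from orth_wrt_scaleR[OF this, of "1 / real (Suc i)" 1]
    show ?thesis
      unfolding monic_derivatives_def mpoly_eval_scaleR[abs_def] by simp
  qed
  moreover have "orth_wrt (Wmat (a+1) (b+1) v)
      (mpoly_eval (monic_derivatives E i) i) (mpoly_eval (monic_derivatives E j) j)" if "i < j" for i j
    using orth_wrt_sym[OF transpose_Wmat lower[OF that]] .
  ultimately show ?thesis
    unfolding monic_orthogonal_def by (metis linorder_neqE_nat)
qed

lemma monic_orthogonal_funpow_monic_derivatives:
  fixes a b v :: real
  assumes "a > -1" "b > -1" "\<bar>a - b\<bar> < \<bar>v\<bar>" "\<bar>v\<bar> < a + b + 2"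
    and "monic_orthogonal (Wmat a b v) E"
  shows "monic_orthogonal (Wmat (a + real k) (b + real k) v) ((monic_derivatives ^^ k) E)"
proof (induction k)
  case 0
  then show ?case using assms(5) by simp
next
  case (Suc k)
  have "monic_orthogonal (Wmat (a + real k + 1) (b + real k + 1) v) (monic_derivatives ((monic_derivatives ^^ k) E))"
    by (rule monic_orthogonal_monic_derivatives[OF _ _ _ _ Suc.IH]) (use assms(1-4) in auto)
  then show ?case by (simp add: add_ac)
qed

lemma funpow_monic_derivatives:
  "(monic_derivatives ^^ k) E j = (\<lambda>i. (fact j / fact (j + k)) *\<^sub>R (mpoly_deriv_coeffs ^^ k) (E (j + k)) i)"
proof (induction k arbitrary: j)
  case 0
  then show ?case by simp
next
  case (Suc k)
  have "1 / real (Suc j) * (fact (Suc j) / fact (Suc (j + k))) = (fact (Suc j) / real (Suc j)) / (fact (Suc (j + k)) :: real)"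
    by simp
  also have "fact (Suc j) / real (Suc j) = (fact j :: real)"
    by (simp only: fact_Suc) (simp del: of_nat_Suc)
  finally have fact_eq: "1 / real (Suc j) * (fact (Suc j) / fact (Suc (j + k))) = (fact j / fact (Suc (j + k)) :: real)" .
  show ?case
  proof (rule ext)
    fix i
    have "(monic_derivatives ^^ Suc k) E j i
        = (1 / real (Suc j)) *\<^sub>R mpoly_deriv_coeffs ((monic_derivatives ^^ k) E (Suc j)) i"
      by (simp only: funpow.simps comp_apply monic_derivatives_def)
    also have "\<dots> = (fact j / fact (j + Suc k)) *\<^sub>R (mpoly_deriv_coeffs ^^ Suc k) (E (j + Suc k)) i"
      by (simp only: Suc.IH mpoly_deriv_coeffs_scaleR scaleR_scaleR funpow.simps comp_apply
          add_Suc add_Suc_right fact_eq)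
    finally show "(monic_derivatives ^^ Suc k) E j i
        = (fact j / fact (j + Suc k)) *\<^sub>R (mpoly_deriv_coeffs ^^ Suc k) (E (j + Suc k)) i" .
  qed
qed

lemma scaled_kth_deriv_mpoly_eval:
  assumes "k \<le> n"
  shows "(\<lambda>t. (fact (n - k) / fact n) *\<^sub>R kth_deriv k (mpoly_eval (C n) n) t)
       = mpoly_eval ((monic_derivatives ^^ k) C (n - k)) (n - k)"
  using kth_deriv_mpoly_eval[of k "C n" "n - k"] assms
  by (simp add: funpow_monic_derivatives mpoly_eval_scaleR fun_eq_iff)

theorem corollary5p4:
  fixes \<alpha> \<beta> v :: real and C :: "nat \<Rightarrow> nat \<Rightarrow> real^2^2" and k n m :: nat
  assumes "\<alpha> > -1" and "\<beta> > -1" and "\<bar>\<alpha> - \<beta>\<bar> < \<bar>v\<bar>" and "\<bar>v\<bar> < \<alpha> + \<beta> + 2"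
    and monic: "\<And>j. monic_deg (C j) j"
    and orth: "\<And>i j. i \<noteq> j \<Longrightarrow>
        orth_wrt (Wmat \<alpha> \<beta> v) (mpoly_eval (C i) i) (mpoly_eval (C j) j)"
    and "k \<ge> 1" and "n \<ge> k" and "m \<ge> k" and "n \<noteq> m"
  shows "orth_wrt (Wmat (\<alpha> + real k) (\<beta> + real k) v)
           (\<lambda>t. (fact (n - k) / fact n) *\<^sub>R kth_deriv k (mpoly_eval (C n) n) t)
           (\<lambda>t. (fact (m - k) / fact m) *\<^sub>R kth_deriv k (mpoly_eval (C m) m) t)"
proof -
  have "monic_orthogonal (Wmat \<alpha> \<beta> v) C"
    unfolding monic_orthogonal_def using monic orth by blast
  then have "monic_orthogonal (Wmat (\<alpha> + real k) (\<beta> + real k) v) ((monic_derivatives ^^ k) C)"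
    using monic_orthogonal_funpow_monic_derivatives assms(1-4) by blast
  moreover have "n - k \<noteq> m - k"
    using assms(8-10) by linarith
  ultimately show ?thesis
    unfolding scaled_kth_deriv_mpoly_eval[OF \<open>n \<ge> k\<close>] scaled_kth_deriv_mpoly_eval[OF \<open>m \<ge> k\<close>]
      monic_orthogonal_def by blast
qed

end
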